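(* Let $a>0$, $u>0$ and $v\in\mathbb{R}$. The inequality $a\cosh x\le\cosh(ux+v)$ holds for all real $x$ if and only if $a\in(0,1]$, $u\ge1$ and $|v|\le v_0(a,u)$, where: if $u>1$, $$v_0=u\log\left(\frac{A}{a}+\frac{uB}{a}\right)-\log(A+B),\qquad A=\sqrt{\frac{u^2-a^2}{u^2-1}},\ B=\sqrt{\frac{1-a^2}{u^2-1}},$$ and if $u=1$, $v_0=-\log a$. *)

theory Defs
  imports Complex_Main
begin

definition v0 :: "real \<Rightarrow> real \<Rightarrow> real" where
  "v0 a u = (if u = 1 then - ln a
     else (let A = sqrt ((u^2 - a^2) / (u^2 - 1));
               B = sqrt ((1 - a^2) / (u^2 - 1))
           in u * ln (A / a + u * B / a) - ln (A + B)))"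

end

theory Submission
  imports Defs
begin

(* Reflecting x \<mapsto> -x shows it depends only on |v|.
   Evaluating at the zero of ux + v forces a \<le> 1, and comparing growth rates for large x
   forces u \<ge> 1.

   For u = 1 the gap 2 (cosh (x + v) - a cosh x) equals (e^v - a) e^x + (e^-v - a) e^-x,
   which is nonnegative for all x iff both coefficients are, i.e. iff |v| \<le> -ln a.

   For u > 1 (and a \<le> 1) the bound v0 comes from a contact point: there are x1 \<ge> 0 and y0
   with a cosh x1 = cosh y0 = A, a sinh x1 = u sinh y0 = u B and v0 = u x1 - y0. Substituting
   x = x1 + s reduces domination at v = -v0 to the elementary comparison
   A cosh s + u B sinh s \<le> A cosh (us) + B sinh (us); for v < -v0 the point with ux + v = y0
   lies beyond x1 and violates the inequality. Domination at \<plusminus>v0 then propagates to all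
   |v| \<le> v0. *)

(* On the reals cosh is even and increasing on [0,\<infinity>), so it compares absolute values. *)
lemma cosh_le_cosh_iff: "cosh x \<le> cosh y \<longleftrightarrow> \<bar>x\<bar> \<le> \<bar>y :: real\<bar>"
  using cosh_real_nonneg_le_iff[of "\<bar>x\<bar>" "\<bar>y\<bar>"] by simp

lemma cosh_less_cosh_iff: "cosh x < cosh y \<longleftrightarrow> \<bar>x\<bar> < \<bar>y :: real\<bar>"
  using cosh_real_nonneg_less_iff[of "\<bar>x\<bar>" "\<bar>y\<bar>"] by simp

lemma cosh_le_exp_abs: "cosh (y :: real) \<le> exp \<bar>y\<bar>"
  unfolding cosh_field_def by (cases "y \<ge> 0") auto

lemma stretch_cosh:
  fixes u s :: real
  assumes "1 \<le> u"
  shows "cosh s \<le> cosh (u * s)"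
proof -
  have "1 * \<bar>s\<bar> \<le> u * \<bar>s\<bar>" using assms by (intro mult_right_mono) auto
  thus ?thesis using assms by (simp add: cosh_le_cosh_iff abs_mult)
qed

lemma exp_tangent_line:
  fixes m z :: real
  shows "exp m * (1 + (z - m)) \<le> exp z"
  using exp_ge_add_one_self[of "z - m"] by (simp add: exp_diff field_simps)

(* For u \<ge> 1 the defect of sinh under stretching is dominated by that of cosh:
   after clearing denominators this is (u+1) e^-r \<le> 2 e^-ur + (u-1) e^r, a weighted
   sum of two tangent-line inequalities of exp at -r. *)
lemma stretch_sinh_cosh_gap:
  fixes u r :: real
  assumes "1 \<le> u"
  shows "sinh (u * r) - u * sinh r \<le> cosh (u * r) - cosh r"
proof -
  have "2 * (exp (-r) * (1 + (-(u * r) - -r))) \<le> 2 * exp (-(u * r))"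
    using exp_tangent_line[of "-r" "-(u * r)"] by simp
  moreover have "(u - 1) * (exp (-r) * (1 + (r - -r))) \<le> (u - 1) * exp r"
    using assms exp_tangent_line[of "-r" r] by (intro mult_left_mono) auto
  moreover have "2 * (exp (-r) * (1 + (-(u * r) - -r))) + (u - 1) * (exp (-r) * (1 + (r - -r)))
      = (u + 1) * exp (-r)"
    by (simp add: algebra_simps)
  ultimately have "(u + 1) * exp (-r) \<le> 2 * exp (-(u * r)) + (u - 1) * exp r"
    by linarith
  thus ?thesis
    unfolding sinh_field_def cosh_field_def by (simp add: field_simps)
qed

(* sinh is superlinear on [0,\<infinity>): the difference sinh (us) - u sinh s has derivative
   u (cosh (us) - cosh s) \<ge> 0. *)
lemma stretch_sinh:
  fixes u s :: real
  assumes "1 \<le> u" "0 \<le> s"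
  shows "u * sinh s \<le> sinh (u * s)"
proof -
  let ?g = "\<lambda>s. sinh (u * s) - u * sinh s"
  have "?g 0 \<le> ?g s"
  proof (rule DERIV_nonneg_imp_nondecreasing[OF assms(2)])
    fix x :: real
    have "0 \<le> u * (cosh (u * x) - cosh x)"
      using assms(1) stretch_cosh[OF assms(1), of x] by simp
    moreover have "(?g has_real_derivative u * (cosh (u * x) - cosh x)) (at x)"
      by (auto intro!: derivative_eq_intros simp: algebra_simps)
    ultimately show "\<exists>y. (?g has_real_derivative y) (at x) \<and> 0 \<le> y" by blast
  qed
  thus ?thesis by simp
qed

(* For s \<ge> 0 compare the
   terms separately; for s < 0 combine B \<le> A with the gap inequality above. *)
lemma stretch_comparison:
  fixes A B u s :: real
  assumes B0: "0 \<le> B" and BA: "B \<le> A" and u1: "1 \<le> u"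
  shows "A * cosh s + B * (u * sinh s) \<le> A * cosh (u * s) + B * sinh (u * s)"
proof (cases "0 \<le> s")
  case True
  have "A * cosh s \<le> A * cosh (u * s)"
    using stretch_cosh[OF u1] B0 BA by (intro mult_left_mono) auto
  moreover have "B * (u * sinh s) \<le> B * sinh (u * s)"
    using stretch_sinh[OF u1 True] B0 by (rule mult_left_mono)
  ultimately show ?thesis by linarith
next
  case False
  define r where "r = -s"
  have r0: "0 \<le> r" using False by (simp add: r_def)
  have gap0: "0 \<le> sinh (u * r) - u * sinh r" using stretch_sinh[OF u1 r0] by simp
  have "B * (sinh (u * r) - u * sinh r) \<le> A * (sinh (u * r) - u * sinh r)"
    using BA gap0 by (rule mult_right_mono)
  also have "\<dots> \<le> A * (cosh (u * r) - cosh r)"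
    using stretch_sinh_cosh_gap[OF u1] B0 BA by (intro mult_left_mono) auto
  finally show ?thesis by (simp add: r_def algebra_simps)
qed

lemma hyperbola_ln_coords:
  fixes p q :: real
  assumes hyp: "p^2 - q^2 = 1" and "0 < p"
  shows "cosh (ln (p + q)) = p" and "sinh (ln (p + q)) = q"
proof -
  have "q^2 < p^2" using hyp by linarith
  hence "\<bar>q\<bar> < p" using \<open>0 < p\<close> by (simp add: power2_less_imp_less)
  hence pos: "0 < p + q" by linarith
  have "(p + q) * (p - q) = 1" using hyp by (simp add: power2_eq_square algebra_simps)
  hence inv: "inverse (p + q) = p - q" by (rule inverse_unique)
  show "cosh (ln (p + q)) = p" and "sinh (ln (p + q)) = q"
    using pos by (simp_all add: cosh_ln_real sinh_ln_real inv)
qed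

definition dominates :: "real \<Rightarrow> real \<Rightarrow> real \<Rightarrow> bool" where
  "dominates a u v \<longleftrightarrow> (\<forall>x. a * cosh x \<le> cosh (u * x + v))"

(* Reflecting x \<mapsto> -x shows that only |v| matters. *)
lemma dominates_neg_iff:
  fixes a u v :: real
  shows "dominates a u (-v) \<longleftrightarrow> dominates a u v"
proof -
  have reflect: "cosh (u * (-x) + -v) = cosh (u * x + v)" for x
    using cosh_minus[of "u * x + v"] by (simp add: algebra_simps)
  show ?thesis
    unfolding dominates_def by (metis reflect cosh_minus minus_minus)
qed

(* Necessity of a \<le> 1: evaluate at the point where ux + v = 0. *)
lemma dominates_imp_le_one:
  fixes a u v :: real
  assumes "0 < a" "0 < u" "dominates a u v"
  shows "a \<le> 1"
proof -
  have "a * cosh (-v/u) \<le> cosh (u * (-v/u) + v)"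
    using assms(3) unfolding dominates_def by blast
  also have "u * (-v/u) + v = 0" using assms(2) by simp
  finally have "a * cosh (-v/u) \<le> 1" by simp
  moreover have "a \<le> a * cosh (-v/u)" using assms(1) cosh_real_ge_1[of "-v/u"] by simp
  ultimately show ?thesis by linarith
qed

(* Necessity of u \<ge> 1: for u < 1 the right-hand side grows too slowly, so a large x
   with |ux + v| < x + ln a - ln 2 violates the inequality. *)
lemma dominates_imp_slope_ge_one:
  fixes a u v :: real
  assumes "0 < a" "0 < u" "dominates a u v"
  shows "1 \<le> u"
proof (rule ccontr)
  assume "\<not> 1 \<le> u"
  define x where "x = (\<bar>v\<bar> + \<bar>ln a\<bar> + 1) / (1 - u)"
  have x0: "0 \<le> x" using \<open>\<not> 1 \<le> u\<close> by (simp add: x_def)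
  have "x - u * x = (1 - u) * x" by (simp add: algebra_simps)
  also have "\<dots> = \<bar>v\<bar> + \<bar>ln a\<bar> + 1" using \<open>\<not> 1 \<le> u\<close> by (simp add: x_def)
  finally have "x - u * x = \<bar>v\<bar> + \<bar>ln a\<bar> + 1" .
  moreover have "\<bar>u * x + v\<bar> \<le> u * x + \<bar>v\<bar>"
    using abs_triangle_ineq[of "u * x" v] x0 assms(2) by simp
  ultimately have "\<bar>u * x + v\<bar> < x + ln a - ln 2"
    using ln_2_less_1 abs_ge_minus_self[of "ln a"] by linarith
  hence "cosh (u * x + v) < exp (x + ln a - ln 2)"
    using cosh_le_exp_abs[of "u * x + v"] by (meson exp_less_cancel_iff order.strict_trans1)
  also have "\<dots> = a * (exp x / 2)" using assms(1) by (simp add: exp_add exp_diff)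
  also have "\<dots> < a * cosh x"
    using assms(1) by (intro mult_strict_left_mono) (simp_all add: cosh_field_def)
  finally show False using assms(3) unfolding dominates_def by (meson not_le)
qed

(* If p t + q/t \<ge> 0 for all t > 0 then q \<ge> 0: otherwise pick t with p t\<^sup>2 < -q. *)
lemma nonneg_on_pos_imp_const_nonneg:
  fixes p q :: real
  assumes nonneg: "\<forall>t>0. 0 \<le> p * t + q / t"
  shows "0 \<le> q"
proof (rule ccontr)
  assume "\<not> 0 \<le> q"
  define t where "t = sqrt (-q / (\<bar>p\<bar> + 1))"
  have pos: "\<bar>p\<bar> + 1 > 0" by (simp add: abs_add_one_gt_zero)
  hence ratio: "-q / (\<bar>p\<bar> + 1) > 0" using \<open>\<not> 0 \<le> q\<close> by (intro divide_pos_pos) auto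
  hence t0: "t > 0" by (simp add: t_def)
  have "t^2 = -q / (\<bar>p\<bar> + 1)" using ratio by (simp add: t_def)
  hence t2: "\<bar>p\<bar> * t^2 + t^2 = -q" using pos by (simp add: field_simps)
  have "p * t^2 \<le> \<bar>p\<bar> * t^2" by (simp add: abs_ge_self mult_right_mono)
  moreover have "t^2 > 0" using t0 by simp
  ultimately have "p * t^2 + q < 0" using t2 by linarith
  hence "(p * t^2 + q) / t < 0" using t0 by (simp add: divide_neg_pos)
  moreover have "(p * t^2 + q) / t = p * t + q / t"
    using t0 by (simp add: field_simps power2_eq_square)
  ultimately show False using nonneg t0 by auto
qed

(* By the substitution t \<mapsto> 1/t the same holds for p. *)
lemma nonneg_on_pos_iff:
  fixes p q :: real
  shows "(\<forall>t>0. 0 \<le> p * t + q / t) \<longleftrightarrow> 0 \<le> p \<and> 0 \<le> q"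
proof
  assume nonneg: "\<forall>t>0. 0 \<le> p * t + q / t"
  have "\<forall>t>0. 0 \<le> q * t + p / t"
  proof (intro allI impI)
    fix t :: real assume "t > 0"
    hence "0 \<le> p * (1 / t) + q / (1 / t)" using nonneg by (metis zero_less_divide_1_iff)
    thus "0 \<le> q * t + p / t" by (simp add: algebra_simps)
  qed
  thus "0 \<le> p \<and> 0 \<le> q" using nonneg nonneg_on_pos_imp_const_nonneg by blast
qed auto

lemma twice_cosh_gap_unit_slope:
  fixes a v x :: real
  shows "2 * (cosh (x + v) - a * cosh x) = (exp v - a) * exp x + (exp (-v) - a) / exp x"
  unfolding cosh_field_def exp_add exp_minus by (simp add: field_simps)

(* The case u = 1: both coefficients e^v - a and e^-v - a must be nonnegative. *)
lemma dominates_unit_slope_iff: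
  fixes a v :: real
  assumes "0 < a"
  shows "dominates a 1 v \<longleftrightarrow> \<bar>v\<bar> \<le> - ln a"
proof -
  define gap where "gap t = (exp v - a) * t + (exp (-v) - a) / t" for t
  have pointwise: "a * cosh x \<le> cosh (1 * x + v) \<longleftrightarrow> 0 \<le> gap (exp x)" for x
    unfolding gap_def twice_cosh_gap_unit_slope[symmetric] by simp
  have exp_range: "(\<forall>x. P (exp x)) \<longleftrightarrow> (\<forall>t>0. P t)" for P :: "real \<Rightarrow> bool"
    by (metis exp_gt_zero exp_ln)
  have "dominates a 1 v \<longleftrightarrow> (\<forall>t>0. 0 \<le> gap t)"
    unfolding dominates_def pointwise exp_range[of "\<lambda>t. 0 \<le> gap t"] ..
  also have "\<dots> \<longleftrightarrow> a \<le> exp v \<and> a \<le> exp (-v)"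
    unfolding gap_def nonneg_on_pos_iff by simp
  also have "\<dots> \<longleftrightarrow> ln a \<le> v \<and> ln a \<le> -v"
    using assms by (metis exp_le_cancel_iff exp_ln)
  finally show ?thesis by linarith
qed

(* For a \<le> 1 < u the extremal shift is realised by a contact point: with y0 = u x1 - v0 a u
   the curves a cosh x and cosh (ux - v0 a u) have the same value A and the same slope u B
   at x = x1. The numbers A, B are those in the definition of v0. *)
lemma contact_point:
  fixes a u :: real
  assumes a0: "0 < a" and a1: "a \<le> 1" and u1: "1 < u"
  obtains A B x1 y0 where "0 \<le> B" "B \<le> A" "0 \<le> x1"
    "a * cosh x1 = A" "a * sinh x1 = u * B" "cosh y0 = A" "sinh y0 = B"
    "v0 a u = u * x1 - y0"
proof -
  define A where "A = sqrt ((u^2 - a^2) / (u^2 - 1))"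
  define B where "B = sqrt ((1 - a^2) / (u^2 - 1))"
  define x1 where "x1 = ln (A / a + u * B / a)"
  define y0 where "y0 = ln (A + B)"
  have den: "0 < u^2 - 1" using u1 by (simp add: one_less_power)
  have a2: "a^2 \<le> 1" using a0 a1 by (simp add: power_le_one)
  have num: "0 \<le> u^2 - a^2" using a2 den by linarith
  have A2: "A^2 = (u^2 - a^2) / (u^2 - 1)" and B2: "B^2 = (1 - a^2) / (u^2 - 1)"
    using den num a2 by (simp_all add: A_def B_def)
  have A0: "0 \<le> A" and B0: "0 \<le> B" using den num a2 by (simp_all add: A_def B_def)
  have AB: "A^2 - B^2 = 1"
    using den by (simp add: A2 B2 diff_divide_distrib[symmetric])
  have "(u^2 - 1) * B^2 = 1 - a^2" using den by (simp add: B2)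
  moreover have "(u * B)^2 = (u^2 - 1) * B^2 + B^2" by (simp add: power_mult_distrib algebra_simps)
  ultimately have ABu: "A^2 - (u * B)^2 = a^2" using AB by linarith
  have "B^2 \<le> A^2" and A2_ge: "1 \<le> A^2" using AB zero_le_power2[of B] by linarith+
  hence "B \<le> A" using A0 power2_le_imp_le by blast
  have Apos: "0 < A" using A0 A2_ge by (cases "A = 0") auto
  have scaled: "(A / a)^2 - (u * B / a)^2 = 1"
    using ABu a0 by (simp add: power_divide diff_divide_distrib[symmetric])
  have cx: "cosh x1 = A / a" and sx: "sinh x1 = u * B / a"
    using hyperbola_ln_coords[OF scaled] Apos a0 by (simp_all add: x1_def)
  have cy: "cosh y0 = A" and sy: "sinh y0 = B"
    using hyperbola_ln_coords[OF AB Apos] by (simp_all add: y0_def)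
  have "0 \<le> x1"
    using sx B0 u1 a0 sinh_real_le_iff[of 0 x1] by simp
  moreover have "v0 a u = u * x1 - y0"
    using u1 by (simp add: v0_def Let_def A_def B_def x1_def y0_def)
  ultimately show thesis
    using that B0 \<open>B \<le> A\<close> cx sx cy sy a0 by simp
qed

(* Sufficiency at the extremal shift -v0: substitute x = x1 + s. *)
lemma dominates_at_contact:
  fixes a u A B x1 y0 :: real
  assumes B0: "0 \<le> B" and BA: "B \<le> A" and u1: "1 \<le> u"
    and cx: "a * cosh x1 = A" and sx: "a * sinh x1 = u * B"
    and cy: "cosh y0 = A" and sy: "sinh y0 = B"
  shows "dominates a u (-(u * x1 - y0))"
  unfolding dominates_def
proof
  fix x :: real
  define s where "s = x - x1"
  have "a * cosh x = a * cosh (s + x1)" by (simp add: s_def)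
  also have "\<dots> = cosh s * (a * cosh x1) + sinh s * (a * sinh x1)"
    by (simp add: cosh_add algebra_simps)
  also have "\<dots> = A * cosh s + B * (u * sinh s)"
    unfolding cx sx by (simp add: algebra_simps)
  also have "\<dots> \<le> A * cosh (u * s) + B * sinh (u * s)"
    using B0 BA u1 by (rule stretch_comparison)
  also have "\<dots> = cosh (u * s + y0)"
    using cy sy by (simp add: cosh_add algebra_simps)
  also have "u * s + y0 = u * x + -(u * x1 - y0)" by (simp add: s_def algebra_simps)
  finally show "a * cosh x \<le> cosh (u * x + -(u * x1 - y0))" .
qed

(* Necessity of v \<ge> -v0: otherwise the point x > x1 with ux + v = y0 gives
   a cosh x > a cosh x1 = cosh y0. *)
lemma dominates_imp_beyond_contact:
  fixes a u v x1 y0 :: real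
  assumes "0 < a" "0 < u" "0 \<le> x1" "a * cosh x1 = cosh y0" "dominates a u v"
  shows "-(u * x1 - y0) \<le> v"
proof (rule ccontr)
  assume "\<not> -(u * x1 - y0) \<le> v"
  define x where "x = (y0 - v) / u"
  have "u * x + v = y0" using assms(2) by (simp add: x_def)
  have "x1 < x"
    using \<open>\<not> -(u * x1 - y0) \<le> v\<close> assms(2) by (simp add: x_def field_simps)
  hence "cosh x1 < cosh x" using assms(3) by (simp add: cosh_less_cosh_iff)
  hence "cosh y0 < a * cosh x" using assms(1,4) mult_strict_left_mono by metis
  moreover have "a * cosh x \<le> cosh y0"
    using assms(5) \<open>u * x + v = y0\<close> unfolding dominates_def by metis
  ultimately show False by simp
qed

(* Domination at the shifts \<plusminus>w propagates to every |v| \<le> w: for |ux| \<ge> w one of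
   ux \<plusminus> w is closer to 0 than ux + v, and for |ux| < w the left side is at most 1. *)
lemma dominates_inward:
  fixes a u v w :: real
  assumes "0 < a" "0 < u" and dom: "dominates a u (-w)" and vw: "\<bar>v\<bar> \<le> w"
  shows "dominates a u v"
  unfolding dominates_def
proof
  fix x :: real
  have lower: "a * cosh x \<le> cosh (u * x - w)" "a * cosh x \<le> cosh (u * x + w)"
    using dom dominates_neg_iff[of a u w] unfolding dominates_def by auto
  show "a * cosh x \<le> cosh (u * x + v)"
  proof (cases "w \<le> \<bar>u * x\<bar>")
    case True
    have v: "-w \<le> v" "v \<le> w" using vw by linarith+
    from True consider "w \<le> u * x" | "u * x \<le> -w" by linarith
    hence "\<bar>u * x - w\<bar> \<le> \<bar>u * x + v\<bar> \<or> \<bar>u * x + w\<bar> \<le> \<bar>u * x + v\<bar>"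
    proof cases
      case 1
      hence "\<bar>u * x - w\<bar> \<le> \<bar>u * x + v\<bar>" using v by (subst (1 2) abs_of_nonneg) linarith+
      thus ?thesis ..
    next
      case 2
      hence "\<bar>u * x + w\<bar> \<le> \<bar>u * x + v\<bar>" using v by (subst (1 2) abs_of_nonpos) linarith+
      thus ?thesis ..
    qed
    thus ?thesis using lower by (auto simp: cosh_le_cosh_iff intro: order_trans)
  next
    case False
    hence "u * \<bar>x\<bar> \<le> w" using assms(2) by (simp add: abs_mult)
    hence "\<bar>x\<bar> \<le> \<bar>w / u\<bar>" using assms(2) vw by (simp add: field_simps)
    hence "a * cosh x \<le> a * cosh (w / u)"
      using assms(1) by (simp add: cosh_le_cosh_iff)
    also have "\<dots> \<le> cosh (u * (w / u) - w)"
      using dom unfolding dominates_def by (metis diff_conv_add_uminus)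
    also have "\<dots> \<le> cosh (u * x + v)" using assms(2) cosh_real_ge_1 by simp
    finally show ?thesis .
  qed
qed

lemma dominates_steep_iff:
  fixes a u v :: real
  assumes a0: "0 < a" and a1: "a \<le> 1" and u1: "1 < u"
  shows "dominates a u v \<longleftrightarrow> \<bar>v\<bar> \<le> v0 a u"
proof -
  obtain A B x1 y0 where BA: "0 \<le> B" "B \<le> A" and x1: "0 \<le> x1"
    and contact: "a * cosh x1 = A" "a * sinh x1 = u * B" "cosh y0 = A" "sinh y0 = B"
    and v0_eq: "v0 a u = u * x1 - y0"
    by (rule contact_point[OF a0 a1 u1])
  have u0: "0 < u" using u1 by simp
  show ?thesis
  proof
    assume "dominates a u v"
    hence "-(u * x1 - y0) \<le> v" and "-(u * x1 - y0) \<le> -v"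
      using dominates_imp_beyond_contact[OF a0 u0 x1] contact dominates_neg_iff by auto
    thus "\<bar>v\<bar> \<le> v0 a u" unfolding v0_eq by linarith
  next
    assume "\<bar>v\<bar> \<le> v0 a u"
    moreover have "dominates a u (-(v0 a u))"
      unfolding v0_eq using dominates_at_contact[OF BA] u1 contact by simp
    ultimately show "dominates a u v" using dominates_inward[OF a0 u0] by blast
  qed
qed

theorem lemma5:
  fixes a u v :: real
  assumes "a > 0" and "u > 0"
  shows "(\<forall>x::real. a * cosh x \<le> cosh (u * x + v)) \<longleftrightarrow>
           (a \<le> 1 \<and> u \<ge> 1 \<and> \<bar>v\<bar> \<le> v0 a u)"
proof -
  have "dominates a u v \<longleftrightarrow> a \<le> 1 \<and> u \<ge> 1 \<and> \<bar>v\<bar> \<le> v0 a u"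
  proof (cases "a \<le> 1 \<and> u \<ge> 1")
    case False
    thus ?thesis using dominates_imp_le_one dominates_imp_slope_ge_one assms by blast
  next
    case True
    consider "u = 1" | "1 < u" using True by linarith
    thus ?thesis
    proof cases
      case 1
      thus ?thesis using True dominates_unit_slope_iff[OF assms(1)] by (simp add: v0_def)
    next
      case 2
      thus ?thesis using True dominates_steep_iff[OF assms(1)] by simp
    qed
  qed
  thus ?thesis unfolding dominates_def .
qed

end
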